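(* Let $\Gamma$ be a totally ordered additive abelian group and $E,F$ finite disjoint sets. A function $\mu\colon\binom{E}{\ast}\times\binom{F}{\ast}\to\overline{\Gamma}$ satisfies the valuated bimatroid axioms (1) and (2) below if and only if the function $\nu\colon\binom{E\sqcup F}{|E|}\to\overline{\Gamma}$, $\nu(S)=\mu(E- S,\,S\cap F)$, is a valuated matroid of rank $|E|$ on $E\sqcup F$ with $\nu(E)=0$. Axioms: (1) $\mu(\emptyset,\emptyset)=0$. (2) For all $(I,J),(I',J')\in\binom{E}{\ast}\times\binom{F}{\ast}$: (i) if $i'\in I'- I$, then either there is $i\in I- I'$ with $\mu(I,J)+\mu(I',J')\geq\mu(I-\{i\}\cup\{i'\},J)+\mu(I'-\{i'\}\cup\{i\},J')$, or there is $j'\in J'- J$ with $\mu(I,J)+\mu(I',J')\geq\mu(I\cup\{i'\},J\cup\{j'\})+\mu(I'-\{i'\},J'-\{j'\})$; (ii) if $j\in J- J'$, then either there is $i\in I- I'$ with $\mu(I,J)+\mu(I',J')\geq\mu(I-\{i\},J-\{j\})+\mu(I'\cup\{i\},J'\cup\{j\})$, or there is $j'\in J'- J$ with $\mu(I,J)+\mu(I',J')\geq\mu(I,J-\{j\}\cup\{j'\})+\mu(I',J'-\{j'\}\cup\{j\})$.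
   Context: $\overline{\Gamma}=\Gamma\sqcup\{\infty\}$ with $\infty$ larger than every element of $\Gamma$. $\binom{E}{\ast}\times\binom{F}{\ast}$ is the set of pairs $(I,J)$ with $I\subseteq E$, $J\subseteq F$, $|I|=|J|$; $\binom{X}{r}$ is the set of $r$-element subsets of $X$. A valuated matroid of rank $r$ on a finite set $X$ is a map $\nu\colon\binom{X}{r}\to\overline{\Gamma}$, not identically $\infty$, such that for all $S,T\in\binom{X}{r}$ and every $s\in S- T$ there is $t\in T- S$ with $\nu(S)+\nu(T)\geq\nu(S-\{s\}\cup\{t\})+\nu(T-\{t\}\cup\{s\})$. *)

theory Defs
  imports Main
begin

text \<open>The extended group \<open>\<Gamma> \<union> {\<infinity>}\<close> is modelled as \<open>'g option\<close>:
  \<open>Some g\<close> is \<open>g \<in> \<Gamma>\<close> and \<open>None\<close> is \<open>\<infinity>\<close>.\<close>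

definition ext_add :: "'g::linordered_ab_group_add option \<Rightarrow> 'g option \<Rightarrow> 'g option" where
  "ext_add a b = (case (a, b) of (Some x, Some y) \<Rightarrow> Some (x + y) | _ \<Rightarrow> None)"

definition ext_le :: "'g::linordered_ab_group_add option \<Rightarrow> 'g option \<Rightarrow> bool" where
  "ext_le a b = (case (a, b) of
       (_, None) \<Rightarrow> True
     | (None, Some _) \<Rightarrow> False
     | (Some x, Some y) \<Rightarrow> x \<le> y)"

text \<open>Valuated matroid of rank r on a finite set X; only the values on r-subsets of X matter.\<close>
definition valuated_matroid ::
  "'e set \<Rightarrow> nat \<Rightarrow> ('e set \<Rightarrow> 'g::linordered_ab_group_add option) \<Rightarrow> bool" where
  "valuated_matroid X r \<nu> \<longleftrightarrow>
     finite X \<and>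
     (\<exists>S. S \<subseteq> X \<and> card S = r \<and> \<nu> S \<noteq> None) \<and>
     (\<forall>S T. S \<subseteq> X \<and> card S = r \<and> T \<subseteq> X \<and> card T = r \<longrightarrow>
        (\<forall>s \<in> S - T. \<exists>t \<in> T - S.
           ext_le (ext_add (\<nu> (S - {s} \<union> {t})) (\<nu> (T - {t} \<union> {s}))) (ext_add (\<nu> S) (\<nu> T))))"

definition bimat_dom :: "'e set \<Rightarrow> 'e set \<Rightarrow> 'e set \<Rightarrow> 'e set \<Rightarrow> bool" where
  "bimat_dom E F I J \<longleftrightarrow> I \<subseteq> E \<and> J \<subseteq> F \<and> card I = card J"

definition valuated_bimatroid_axioms ::
  "'e set \<Rightarrow> 'e set \<Rightarrow> ('e set \<Rightarrow> 'e set \<Rightarrow> 'g::linordered_ab_group_add option) \<Rightarrow> bool" where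
  "valuated_bimatroid_axioms E F \<mu> \<longleftrightarrow>
     \<mu> {} {} = Some 0 \<and>
     (\<forall>I J I' J'. bimat_dom E F I J \<and> bimat_dom E F I' J' \<longrightarrow>
        (\<forall>i' \<in> I' - I.
           (\<exists>i \<in> I - I'. ext_le (ext_add (\<mu> (I - {i} \<union> {i'}) J) (\<mu> (I' - {i'} \<union> {i}) J'))
                                 (ext_add (\<mu> I J) (\<mu> I' J'))) \<or>
           (\<exists>j' \<in> J' - J. ext_le (ext_add (\<mu> (I \<union> {i'}) (J \<union> {j'})) (\<mu> (I' - {i'}) (J' - {j'})))
                                 (ext_add (\<mu> I J) (\<mu> I' J')))) \<and>
        (\<forall>j \<in> J - J'.
           (\<exists>i \<in> I - I'. ext_le (ext_add (\<mu> (I - {i}) (J - {j})) (\<mu> (I' \<union> {i}) (J' \<union> {j})))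
                                 (ext_add (\<mu> I J) (\<mu> I' J'))) \<or>
           (\<exists>j' \<in> J' - J. ext_le (ext_add (\<mu> I (J - {j} \<union> {j'})) (\<mu> I' (J' - {j'} \<union> {j})))
                                 (ext_add (\<mu> I J) (\<mu> I' J')))))"

end

theory Submission
  imports Defs
begin

text \<open>The map \<open>(I, J) \<mapsto> (E - I) \<union> J\<close> is a bijection from pairs \<open>I \<subseteq> E\<close>, \<open>J \<subseteq> F\<close> with
  \<open>|I| = |J|\<close> onto the \<open>|E|\<close>-subsets of \<open>E \<union> F\<close>, with inverse \<open>S \<mapsto> (E - S, S \<inter> F)\<close>; it sends
  \<open>(\<emptyset>, \<emptyset>)\<close> to \<open>E\<close>. Exchanging \<open>s \<in> S - T\<close> against \<open>t \<in> T - S\<close> in the matroid axiom splits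
  into four cases according as \<open>s\<close> and \<open>t\<close> lie in \<open>E\<close> or \<open>F\<close>, and these are exactly the four
  alternatives of the bimatroid axiom (2), so the two exchange conditions coincide pair by pair.\<close>

definition bimatroid_exchange ::
  "('e set \<Rightarrow> 'e set \<Rightarrow> 'g::linordered_ab_group_add option) \<Rightarrow> 'e set \<Rightarrow> 'e set \<Rightarrow> 'e set \<Rightarrow> 'e set \<Rightarrow> bool" where
  "bimatroid_exchange \<mu> I J I' J' \<longleftrightarrow>
     (\<forall>i' \<in> I' - I.
        (\<exists>i \<in> I - I'. ext_le (ext_add (\<mu> (I - {i} \<union> {i'}) J) (\<mu> (I' - {i'} \<union> {i}) J'))
                              (ext_add (\<mu> I J) (\<mu> I' J'))) \<or>
        (\<exists>j' \<in> J' - J. ext_le (ext_add (\<mu> (I \<union> {i'}) (J \<union> {j'})) (\<mu> (I' - {i'}) (J' - {j'})))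
                              (ext_add (\<mu> I J) (\<mu> I' J')))) \<and>
     (\<forall>j \<in> J - J'.
        (\<exists>i \<in> I - I'. ext_le (ext_add (\<mu> (I - {i}) (J - {j})) (\<mu> (I' \<union> {i}) (J' \<union> {j})))
                              (ext_add (\<mu> I J) (\<mu> I' J'))) \<or>
        (\<exists>j' \<in> J' - J. ext_le (ext_add (\<mu> I (J - {j} \<union> {j'})) (\<mu> I' (J' - {j'} \<union> {j})))
                              (ext_add (\<mu> I J) (\<mu> I' J'))))"

definition basis_exchange :: "('e set \<Rightarrow> 'g::linordered_ab_group_add option) \<Rightarrow> 'e set \<Rightarrow> 'e set \<Rightarrow> bool" where
  "basis_exchange \<nu> S T \<longleftrightarrow>
     (\<forall>s \<in> S - T. \<exists>t \<in> T - S.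
        ext_le (ext_add (\<nu> (S - {s} \<union> {t})) (\<nu> (T - {t} \<union> {s}))) (ext_add (\<nu> S) (\<nu> T)))"

lemma valuated_bimatroid_axioms_iff:
  "valuated_bimatroid_axioms E F \<mu> \<longleftrightarrow>
     \<mu> {} {} = Some 0 \<and>
     (\<forall>I J I' J'. bimat_dom E F I J \<and> bimat_dom E F I' J' \<longrightarrow> bimatroid_exchange \<mu> I J I' J')"
  unfolding valuated_bimatroid_axioms_def bimatroid_exchange_def ..

lemma valuated_matroid_iff:
  "valuated_matroid X r \<nu> \<longleftrightarrow>
     finite X \<and> (\<exists>S. S \<subseteq> X \<and> card S = r \<and> \<nu> S \<noteq> None) \<and>
     (\<forall>S T. S \<subseteq> X \<and> card S = r \<and> T \<subseteq> X \<and> card T = r \<longrightarrow> basis_exchange \<nu> S T)"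
  unfolding valuated_matroid_def basis_exchange_def ..

lemma bimatroid_exchange_iff_basis_exchange:
  assumes "E \<inter> F = {}" "I \<subseteq> E" "J \<subseteq> F" "I' \<subseteq> E" "J' \<subseteq> F"
  shows "bimatroid_exchange \<mu> I J I' J' \<longleftrightarrow>
           basis_exchange (\<lambda>S. \<mu> (E - S) (S \<inter> F)) ((E - I) \<union> J) ((E - I') \<union> J')"
    (is "_ \<longleftrightarrow> basis_exchange ?\<nu> ?S ?T")
proof -
  have "?S - ?T = (I' - I) \<union> (J - J')" "?T - ?S = (I - I') \<union> (J' - J)"
    using assms by auto
  moreover have "E - ?S = I" "?S \<inter> F = J" "E - ?T = I'" "?T \<inter> F = J'"
    using assms by auto
  moreover have
    "\<And>s t. s \<in> I' - I \<Longrightarrow> t \<in> I - I' \<Longrightarrow>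
       E - (?S - {s} \<union> {t}) = I - {t} \<union> {s} \<and> (?S - {s} \<union> {t}) \<inter> F = J \<and>
       E - (?T - {t} \<union> {s}) = I' - {s} \<union> {t} \<and> (?T - {t} \<union> {s}) \<inter> F = J'"
    "\<And>s t. s \<in> I' - I \<Longrightarrow> t \<in> J' - J \<Longrightarrow>
       E - (?S - {s} \<union> {t}) = I \<union> {s} \<and> (?S - {s} \<union> {t}) \<inter> F = J \<union> {t} \<and>
       E - (?T - {t} \<union> {s}) = I' - {s} \<and> (?T - {t} \<union> {s}) \<inter> F = J' - {t}"
    "\<And>s t. s \<in> J - J' \<Longrightarrow> t \<in> I - I' \<Longrightarrow>
       E - (?S - {s} \<union> {t}) = I - {t} \<and> (?S - {s} \<union> {t}) \<inter> F = J - {s} \<and>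
       E - (?T - {t} \<union> {s}) = I' \<union> {t} \<and> (?T - {t} \<union> {s}) \<inter> F = J' \<union> {s}"
    "\<And>s t. s \<in> J - J' \<Longrightarrow> t \<in> J' - J \<Longrightarrow>
       E - (?S - {s} \<union> {t}) = I \<and> (?S - {s} \<union> {t}) \<inter> F = J - {s} \<union> {t} \<and>
       E - (?T - {t} \<union> {s}) = I' \<and> (?T - {t} \<union> {s}) \<inter> F = J' - {t} \<union> {s}"
    using assms by auto
  ultimately show ?thesis
    unfolding bimatroid_exchange_def basis_exchange_def by (simp add: ball_Un bex_Un)
qed

lemma card_complement_coordinates:
  assumes "finite E" "finite F" "E \<inter> F = {}" "S \<subseteq> E \<union> F" "card S = card E"
  shows "card (E - S) = card (S \<inter> F)"
proof -
  have "S = (S \<inter> E) \<union> (S \<inter> F)" "(S \<inter> E) \<inter> (S \<inter> F) = {}"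
    using assms(3,4) by auto
  then have "card S = card (S \<inter> E) + card (S \<inter> F)"
    using assms(1,2) by (metis card_Un_disjoint finite_Int)
  moreover have "card E = card (E - S) + card (S \<inter> E)"
    using assms(1) by (metis card_Diff_subset_Int card_Int_Diff Int_commute finite_Int add.commute)
  ultimately show ?thesis using assms(5) by simp
qed

lemma card_basis_of_coordinates:
  assumes "finite E" "finite F" "E \<inter> F = {}" "I \<subseteq> E" "J \<subseteq> F" "card I = card J"
  shows "card ((E - I) \<union> J) = card E"
proof -
  have "card ((E - I) \<union> J) = card (E - I) + card J"
    using assms by (intro card_Un_disjoint) (auto intro: finite_subset)
  moreover have "card (E - I) = card E - card I" "card I \<le> card E"
    using assms(1,4) by (auto simp: card_Diff_subset finite_subset card_mono)
  ultimately show ?thesis using assms(6) by simp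
qed

lemma all_bimatroid_exchange_iff_all_basis_exchange:
  assumes "finite E" "finite F" "E \<inter> F = {}"
  shows "(\<forall>I J I' J'. bimat_dom E F I J \<and> bimat_dom E F I' J' \<longrightarrow> bimatroid_exchange \<mu> I J I' J') \<longleftrightarrow>
         (\<forall>S T. S \<subseteq> E \<union> F \<and> card S = card E \<and> T \<subseteq> E \<union> F \<and> card T = card E \<longrightarrow>
            basis_exchange (\<lambda>S. \<mu> (E - S) (S \<inter> F)) S T)"
    (is "?bimatroid \<longleftrightarrow> ?bases")
proof
  assume ?bimatroid
  show ?bases
  proof (intro allI impI)
    fix S T
    assume ST: "S \<subseteq> E \<union> F \<and> card S = card E \<and> T \<subseteq> E \<union> F \<and> card T = card E"
    with \<open>?bimatroid\<close> have "bimatroid_exchange \<mu> (E - S) (S \<inter> F) (E - T) (T \<inter> F)"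
      using card_complement_coordinates[OF assms] by (simp add: bimat_dom_def)
    moreover have "(E - (E - S)) \<union> (S \<inter> F) = S" "(E - (E - T)) \<union> (T \<inter> F) = T"
      using ST by auto
    ultimately show "basis_exchange (\<lambda>S. \<mu> (E - S) (S \<inter> F)) S T"
      using bimatroid_exchange_iff_basis_exchange[OF assms(3), of "E - S" "S \<inter> F" "E - T" "T \<inter> F"]
      by auto
  qed
next
  assume ?bases
  show ?bimatroid
  proof (intro allI impI)
    fix I J I' J'
    assume dom: "bimat_dom E F I J \<and> bimat_dom E F I' J'"
    have "basis_exchange (\<lambda>S. \<mu> (E - S) (S \<inter> F)) ((E - I) \<union> J) ((E - I') \<union> J')"
    proof (rule \<open>?bases\<close>[rule_format], intro conjI)
      show "card ((E - I) \<union> J) = card E" "card ((E - I') \<union> J') = card E"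
        using dom card_basis_of_coordinates[OF assms] by (auto simp: bimat_dom_def)
    qed (use dom in \<open>auto simp: bimat_dom_def\<close>)
    with dom show "bimatroid_exchange \<mu> I J I' J'"
      using bimatroid_exchange_iff_basis_exchange[OF assms(3), of I J I' J' \<mu>]
      by (simp add: bimat_dom_def)
  qed
qed

theorem proposition2p2:
  fixes E F :: "'e set"
    and \<mu> :: "'e set \<Rightarrow> 'e set \<Rightarrow> 'g::linordered_ab_group_add option"
  assumes "finite E" and "finite F" and "E \<inter> F = {}"
  shows "valuated_bimatroid_axioms E F \<mu> \<longleftrightarrow>
           (valuated_matroid (E \<union> F) (card E) (\<lambda>S. \<mu> (E - S) (S \<inter> F)) \<and>
            (\<lambda>S. \<mu> (E - S) (S \<inter> F)) E = Some 0)"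
proof -
  have "(\<lambda>S. \<mu> (E - S) (S \<inter> F)) E = \<mu> {} {}"
    using assms(3) by (simp add: Int_commute)
  moreover have "finite (E \<union> F)"
    using assms(1,2) by simp
  ultimately show ?thesis
    unfolding valuated_bimatroid_axioms_iff valuated_matroid_iff
      all_bimatroid_exchange_iff_all_basis_exchange[OF assms]
    by auto
qed

end
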